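(* Let $n\in\mathbb{N}$ and let $A,B\in M_n(\mathbb{C})$ be unitary matrices. For $\lambda\in\mathbb{T}$ define the $2n\times 2n$ matrices \[S_\lambda=\begin{pmatrix}A&\lambda B\\ B&A\end{pmatrix},\qquad T_\lambda=\begin{pmatrix}B&A\\ \bar\lambda A&B\end{pmatrix}.\] Then for every $\lambda\in\mathbb{T}$ the matrices $S_\lambda$ and $T_\lambda$ commute, and \[\inf_{\lambda\in\mathbb{T}}\max\{\|S_\lambda\|,\|T_\lambda\|\}\leq\sqrt{2+2\sin\bigl(\tfrac{\pi}{2}(1-\tfrac1n)\bigr)}.\]
   Context: $\mathbb{T}$ is the unit circle in $\mathbb{C}$ and $\|\cdot\|$ is the operator norm. *)

theory Defs
  imports "HOL-Analysis.Analysis"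
begin

definition adjoint_cmat :: "complex^'n^'n \<Rightarrow> complex^'n^'n" where
  "adjoint_cmat A = (\<chi> i j. cnj (A $ j $ i))"

definition unitary_cmat :: "complex^'n^'n \<Rightarrow> bool" where
  "unitary_cmat A \<longleftrightarrow> A ** adjoint_cmat A = mat 1 \<and> adjoint_cmat A ** A = mat 1"

definition block2 :: "complex^'n^'n \<Rightarrow> complex^'n^'n \<Rightarrow> complex^'n^'n \<Rightarrow> complex^'n^'n
    \<Rightarrow> complex^('n + 'n)^('n + 'n)" where
  "block2 P Q R S = (\<chi> i j. (case i of
      Inl a \<Rightarrow> (case j of Inl b \<Rightarrow> P $ a $ b | Inr b \<Rightarrow> Q $ a $ b)
    | Inr a \<Rightarrow> (case j of Inl b \<Rightarrow> R $ a $ b | Inr b \<Rightarrow> S $ a $ b)))"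

definition cmat_scale :: "complex \<Rightarrow> complex^'n^'m \<Rightarrow> complex^'n^'m" where
  "cmat_scale c A = (\<chi> i j. c * A $ i $ j)"

definition op_norm :: "complex^'m^'m \<Rightarrow> real" where
  "op_norm M = onorm (\<lambda>x. M *v x)"

end

theory Submission
  imports Defs
begin

(* Write x = (x1, x2). Since A and B are unitary,
     |S x|^2 = |T x|^2 = 2 |x|^2 + 2 Re <x1, D x2>,   D = lambda A*B + B*A,
   so both norms are at most sqrt (2 + |D|). Moreover D = B*A (lambda W + 1) with the unitary
   W = (A*B)^2, hence |D| = |lambda W + 1|. The at most n eigenvalues of W leave a free arc of
   length at least 2 pi / n on the circle; choosing lambda so that it rotates the midpoint of
   that arc to 1 puts every eigenvalue of lambda W at angle at least pi / n from 1, and an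
   orthonormal eigenbasis of W then gives |lambda W + 1| <= 2 cos (pi / 2n)
   = 2 sin (pi / 2 (1 - 1/n)). That S and T commute is a block computation using
   lambda * cnj lambda = 1. *)

section \<open>The complex inner product on \<open>complex^'n\<close>\<close>

definition cinner :: "complex^'n \<Rightarrow> complex^'n \<Rightarrow> complex" where
  "cinner x y = (\<Sum>i\<in>UNIV. cnj (x$i) * y$i)"

lemma Re_cinner: "Re (cinner x y) = inner x y"
  by (simp add: cinner_def inner_vec_def inner_complex_def Re_sum)

lemma cinner_self: "cinner x x = of_real ((norm x)\<^sup>2)"
proof -
  have "(norm x)\<^sup>2 = (\<Sum>i\<in>UNIV. (cmod (x$i))\<^sup>2)"
    by (simp add: norm_vec_def L2_set_def sum_nonneg)
  then have "of_real ((norm x)\<^sup>2) = (\<Sum>i\<in>UNIV. of_real ((cmod (x$i))\<^sup>2) :: complex)"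
    by simp
  also have "\<dots> = cinner x x"
    unfolding cinner_def by (intro sum.cong refl) (metis complex_norm_square mult.commute)
  finally show ?thesis ..
qed

lemma cnj_cinner: "cnj (cinner x y) = cinner y x"
  by (simp add: cinner_def mult.commute)

lemma cinner_add_right: "cinner x (y + z) = cinner x y + cinner x z"
  by (simp add: cinner_def distrib_left sum.distrib)

lemma cinner_diff_right: "cinner x (y - z) = cinner x y - cinner x z"
  by (simp add: cinner_def right_diff_distrib sum_subtractf)

lemma cinner_scale_right: "cinner x (c *s y) = c * cinner x y"
  by (simp add: cinner_def sum_distrib_left algebra_simps)

lemma cinner_scale_left: "cinner (c *s x) y = cnj c * cinner x y"
  by (simp add: cinner_def sum_distrib_left algebra_simps)

lemma cinner_zero_right [simp]: "cinner x 0 = 0"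
  by (simp add: cinner_def)

lemma cinner_sum_right: "cinner x (\<Sum>e\<in>E. f e) = (\<Sum>e\<in>E. cinner x (f e))"
  by (simp add: cinner_def sum_component sum_distrib_left) (rule sum.swap)

lemma scaleR_eq_vector_scalar_mult: "r *\<^sub>R x = complex_of_real r *s (x :: complex^'n)"
  by (simp add: vec_eq_iff) (simp add: scaleR_conv_of_real)

lemma norm_vector_scalar_mult: "norm (c *s x) = cmod c * norm (x :: complex^'n)"
proof -
  have "complex_of_real ((norm (c *s x))\<^sup>2) = of_real ((cmod c * norm x)\<^sup>2)"
    unfolding cinner_self [symmetric] cinner_scale_left cinner_scale_right
    by (simp add: cinner_self power_mult_distrib flip: complex_norm_square)
  then show ?thesis
    by (simp only: of_real_eq_iff power2_eq_iff_nonneg norm_ge_zero zero_le_mult_iff) simp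
qed

lemma cinner_adjoint_left: "cinner (A *v x) y = cinner x (adjoint_cmat A *v y)"
proof -
  have "cinner (A *v x) y = (\<Sum>i\<in>UNIV. \<Sum>j\<in>UNIV. cnj (A$i$j) * cnj (x$j) * y$i)"
    by (simp add: cinner_def matrix_vector_mult_def cnj_sum sum_distrib_right)
  also have "\<dots> = (\<Sum>j\<in>UNIV. \<Sum>i\<in>UNIV. cnj (A$i$j) * cnj (x$j) * y$i)"
    by (rule sum.swap)
  also have "\<dots> = cinner x (adjoint_cmat A *v y)"
    by (simp add: cinner_def matrix_vector_mult_def adjoint_cmat_def sum_distrib_left mult_ac)
  finally show ?thesis .
qed

lemma cinner_adjoint_right: "cinner x (A *v y) = cinner (adjoint_cmat A *v x) y"
  by (metis cinner_adjoint_left cnj_cinner)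

lemma inner_adjoint_cmat_right: "inner x (A *v y) = inner (adjoint_cmat A *v x) y"
  by (simp add: cinner_adjoint_right flip: Re_cinner)

lemma adjoint_cmat_adjoint_cmat [simp]: "adjoint_cmat (adjoint_cmat A) = A"
  by (simp add: adjoint_cmat_def vec_eq_iff)

lemma adjoint_cmat_mult: "adjoint_cmat (A ** B) = adjoint_cmat B ** adjoint_cmat A"
  by (simp add: adjoint_cmat_def vec_eq_iff matrix_matrix_mult_def mult.commute)

lemma unitary_cmat_mult:
  assumes "unitary_cmat A" "unitary_cmat B"
  shows "unitary_cmat (A ** B)"
proof -
  have "(A ** B) ** (adjoint_cmat B ** adjoint_cmat A) = A ** ((B ** adjoint_cmat B) ** adjoint_cmat A)"
    "(adjoint_cmat B ** adjoint_cmat A) ** (A ** B) = adjoint_cmat B ** ((adjoint_cmat A ** A) ** B)"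
    by (simp_all add: matrix_mul_assoc)
  with assms show ?thesis
    by (simp add: unitary_cmat_def adjoint_cmat_mult matrix_mul_lid)
qed

lemma unitary_cmat_adjoint: "unitary_cmat A \<Longrightarrow> unitary_cmat (adjoint_cmat A)"
  unfolding unitary_cmat_def by simp

lemma unitary_cmat_adjoint_cancel: "unitary_cmat A \<Longrightarrow> adjoint_cmat A *v (A *v x) = x"
  unfolding unitary_cmat_def by (simp add: matrix_vector_mul_assoc)

lemma unitary_cmat_cancel_adjoint: "unitary_cmat A \<Longrightarrow> A *v (adjoint_cmat A *v x) = x"
  unfolding unitary_cmat_def by (simp add: matrix_vector_mul_assoc)

lemma unitary_cmat_cinner: "unitary_cmat A \<Longrightarrow> cinner (A *v x) (A *v y) = cinner x y"
  by (simp add: cinner_adjoint_left unitary_cmat_adjoint_cancel)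

lemma unitary_cmat_norm: "unitary_cmat A \<Longrightarrow> norm (A *v x) = norm x"
  using unitary_cmat_cinner[of A x x]
  by (simp add: cinner_self power2_eq_iff_nonneg del: of_real_power)

lemma unitary_cmat_eigenvalue_norm:
  assumes "unitary_cmat A" "A *v x = z *s x" "x \<noteq> 0"
  shows "cmod z = 1"
  using unitary_cmat_norm[OF assms(1), of x] assms(2,3) by (simp add: norm_vector_scalar_mult)

section \<open>Rotating finitely many points of the circle away from \<open>1\<close>\<close>

lemma finite_set_has_gap:
  fixes P :: "real set"
  assumes "finite P" "P \<subseteq> {a..<c}" "a \<in> P" "card P \<le> m"
  shows "\<exists>p\<in>P. p + (c - a) / m \<le> c \<and> (\<forall>q\<in>P. q \<le> p \<or> p + (c - a) / m \<le> q)"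
  using assms
proof (induction m arbitrary: P c)
  case 0
  then show ?case by (simp add: card_gt_0_iff)
next
  case (Suc m)
  have "a < c" using Suc.prems by auto
  define M where "M = Max P"
  have "M \<in> P" and M_max: "\<forall>q\<in>P. q \<le> M"
    using Suc.prems by (auto simp: M_def intro: Max_in)
  show ?case
  proof (cases "M + (c - a) / Suc m \<le> c")
    case True
    then show ?thesis using \<open>M \<in> P\<close> M_max by blast
  next
    case False
    have "(c - a) / Suc m \<le> c - a"
      using \<open>a < c\<close> by (simp add: divide_le_eq)
    then have "a \<noteq> M" using False by auto
    define P' where "P' = P - {M}"
    have "a \<in> P'" "finite P'" "card P' \<le> m" "P' \<subseteq> {a..<M}"
      using Suc.prems \<open>M \<in> P\<close> \<open>a \<noteq> M\<close> M_max by (force simp: P'_def)+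
    then obtain p where "p \<in> P'" and p_le: "p + (M - a) / m \<le> M"
      and p_gap: "\<forall>q\<in>P'. q \<le> p \<or> p + (M - a) / m \<le> q"
      using Suc.IH by blast
    have "m \<noteq> 0"
      using \<open>a \<in> P'\<close> \<open>finite P'\<close> \<open>card P' \<le> m\<close> card_gt_0_iff by fastforce
    have gap_le: "(c - a) / Suc m \<le> (M - a) / m"
    proof -
      have "(c - a) * m < (M - a) * Suc m"
        using False by (simp add: field_simps)
      then show ?thesis using \<open>m \<noteq> 0\<close> by (simp add: field_simps)
    qed
    have "M < c" using \<open>M \<in> P\<close> Suc.prems(2) by auto
    show ?thesis
    proof (intro bexI conjI ballI)
      show "p \<in> P" using \<open>p \<in> P'\<close> by (simp add: P'_def)
      show "p + (c - a) / Suc m \<le> c" using gap_le p_le \<open>M < c\<close> by linarith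
    next
      fix q assume "q \<in> P"
      then show "q \<le> p \<or> p + (c - a) / Suc m \<le> q"
        using p_gap gap_le p_le by (cases "q = M") (auto simp: P'_def)
    qed
  qed
qed

lemma cos_le_cos_away_from_zero:
  assumes "0 \<le> d" "d \<le> \<bar>x\<bar>" "\<bar>x\<bar> \<le> 2 * pi - d"
  shows "cos x \<le> cos d"
proof (cases "\<bar>x\<bar> \<le> pi")
  case True
  then show ?thesis
    using cos_mono_le_eq[of "\<bar>x\<bar>" d] assms by (simp add: cos_abs_real)
next
  case False
  have "cos x = cos (2 * pi - \<bar>x\<bar>)"
    by (simp add: cos_diff cos_abs_real)
  also have "\<dots> \<le> cos d"
    using cos_mono_le_eq[of "2 * pi - \<bar>x\<bar>" d] assms False by auto
  finally show ?thesis .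
qed

lemma exists_rotation_Re_le_cos:
  fixes Z :: "complex set"
  assumes "finite Z" "card Z \<le> n" "n \<ge> 1" "Z \<subseteq> sphere 0 1"
  shows "\<exists>\<mu>. cmod \<mu> = 1 \<and> (\<forall>z\<in>Z. Re (\<mu> * z) \<le> cos (pi / n))"
proof (cases "Z = {}")
  case True
  then show ?thesis by (intro exI[of _ 1]) auto
next
  case False
  define P where "P = Arg ` Z"
  define a where "a = Min P"
  have "finite P" "P \<noteq> {}" using assms False by (auto simp: P_def)
  then have "a \<in> P" by (simp add: a_def)
  have P_sub: "P \<subseteq> {a..<a + 2 * pi}"
  proof
    fix x assume "x \<in> P"
    then have "a \<le> x" using \<open>finite P\<close> by (simp add: a_def)
    moreover have "x \<le> pi" "- pi < a"
      using \<open>x \<in> P\<close> \<open>a \<in> P\<close> Arg_bounded by (auto simp: P_def)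
    ultimately show "x \<in> {a..<a + 2 * pi}" by auto
  qed
  have "card P \<le> n" using assms card_image_le by (metis P_def le_trans)
  then obtain p where "p \<in> P" and p_le: "p + 2 * pi / n \<le> a + 2 * pi"
    and p_gap: "\<forall>q\<in>P. q \<le> p \<or> p + 2 * pi / n \<le> q"
    using finite_set_has_gap[OF \<open>finite P\<close> P_sub \<open>a \<in> P\<close>] by auto
  define s where "s = p + pi / n"
  show ?thesis
  proof (intro exI[of _ "cis (- s)"] conjI ballI)
    fix z assume "z \<in> Z"
    define q where "q = Arg z"
    have "q \<in> P" using \<open>z \<in> Z\<close> by (simp add: P_def q_def)
    have "cmod z = 1" using \<open>z \<in> Z\<close> assms(4) by auto
    then have "z = cis q"
      using cis_Arg[of z] by (force simp: q_def sgn_div_norm)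
    then have "Re (cis (- s) * z) = cos (q - s)"
      by (simp add: cis_mult)
    also have "\<dots> \<le> cos (pi / n)"
    proof (rule cos_le_cos_away_from_zero)
      have "2 * pi / n = 2 * (pi / n)" by simp
      moreover have "a \<le> q" "q < a + 2 * pi" "a \<le> p"
        using \<open>q \<in> P\<close> \<open>p \<in> P\<close> P_sub by auto
      ultimately show "pi / n \<le> \<bar>q - s\<bar>" "\<bar>q - s\<bar> \<le> 2 * pi - pi / n"
        using p_gap \<open>q \<in> P\<close> p_le unfolding s_def by (smt (verit))+
    qed simp
    finally show "Re (cis (- s) * z) \<le> cos (pi / n)" .
  qed simp
qed

section \<open>Orthonormal eigenbases of unitary matrices\<close>

definition corthonormal :: "(complex^'n) set \<Rightarrow> bool" where
  "corthonormal E \<longleftrightarrow> (\<forall>e\<in>E. \<forall>e'\<in>E. cinner e e' = (if e = e' then 1 else 0))"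

lemma corthonormal_independent:
  assumes "corthonormal E"
  shows "vec.independent E"
  unfolding vec.independent_explicit_finite_subsets
proof (intro allI impI ballI)
  fix S u v
  assume "S \<subseteq> E" "finite S" "(\<Sum>w\<in>S. u w *s w) = 0" "v \<in> S"
  then have "0 = cinner v (\<Sum>w\<in>S. u w *s w)"
    by simp
  also have "\<dots> = (\<Sum>w\<in>S. u w * cinner v w)"
    by (simp add: cinner_sum_right cinner_scale_right)
  also have "\<dots> = (\<Sum>w\<in>S. if v = w then u w else 0)"
  proof (rule sum.cong [OF refl])
    fix w assume "w \<in> S"
    then have "cinner v w = (if v = w then 1 else 0)"
      using assms \<open>S \<subseteq> E\<close> \<open>v \<in> S\<close> unfolding corthonormal_def by blast
    then show "u w * cinner v w = (if v = w then u w else 0)" by simp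
  qed
  also have "\<dots> = u v"
    using \<open>finite S\<close> \<open>v \<in> S\<close> by simp
  finally show "u v = 0" ..
qed

lemma corthonormal_card_le:
  assumes "corthonormal (E :: (complex^'n) set)"
  shows "finite E" "card E \<le> CARD('n)"
proof -
  have "vec.independent E"
    using assms by (rule corthonormal_independent)
  then have "finite E" "card E \<le> vec.dim E"
    using vec.independent_bound_general by auto
  moreover have "vec.dim E \<le> CARD('n)"
    using vec.dim_subset_UNIV by (simp add: vec.dimension_def card_cart_basis)
  ultimately show "finite E" "card E \<le> CARD('n)"
    by auto
qed

lemma corthonormal_expansion:
  assumes "corthonormal E" "finite E"
    and complete: "\<And>w. (\<And>e. e \<in> E \<Longrightarrow> cinner e w = 0) \<Longrightarrow> w = 0"
  shows "v = (\<Sum>e\<in>E. cinner e v *s e)"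
proof -
  have "cinner e (v - (\<Sum>e\<in>E. cinner e v *s e)) = 0" if "e \<in> E" for e
  proof -
    have "cinner e (\<Sum>e'\<in>E. cinner e' v *s e') = (\<Sum>e'\<in>E. if e = e' then cinner e' v else 0)"
      using assms(1) that by (auto simp: cinner_sum_right cinner_scale_right corthonormal_def
          intro!: sum.cong)
    then show ?thesis
      using \<open>finite E\<close> that by (simp add: cinner_diff_right)
  qed
  then have "v - (\<Sum>e\<in>E. cinner e v *s e) = 0"
    by (rule complete)
  then show ?thesis by simp
qed

lemma nonneg_symmetric_form_zero_imp_zero:
  fixes P :: "'a::real_inner \<Rightarrow> 'a"
  assumes "linear P" "subspace V" "\<And>x. x \<in> V \<Longrightarrow> P x \<in> V"
    and symmetric: "\<And>x y. inner x (P y) = inner (P x) y"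
    and nonneg: "\<And>x. x \<in> V \<Longrightarrow> 0 \<le> inner x (P x)"
    and "v \<in> V" "inner v (P v) = 0"
  shows "P v = 0"
proof (rule ccontr)
  define w where "w = P v"
  assume "P v \<noteq> 0"
  then have "0 < inner w w" by (simp add: w_def)
  have "w \<in> V" using assms by (simp add: w_def)
  define t where "t = inner w w / (inner w (P w) + 1)"
  have "0 \<le> inner w (P w)" using nonneg \<open>w \<in> V\<close> .
  then have "0 < t" "t * inner w (P w) < inner w w"
    using \<open>0 < inner w w\<close> by (auto simp: t_def field_simps)
  have "v - t *\<^sub>R w \<in> V"
    using assms(2) \<open>v \<in> V\<close> \<open>w \<in> V\<close> by (simp add: subspace_diff subspace_scale)
  then have "0 \<le> inner (v - t *\<^sub>R w) (P (v - t *\<^sub>R w))"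
    by (rule nonneg)
  also have "\<dots> = inner v (P v) - t * inner v (P w) - t * inner w (P v) + t * t * inner w (P w)"
    by (simp add: linear_diff[OF assms(1)] linear_scale[OF assms(1)] inner_diff_left
        inner_diff_right algebra_simps)
  also have "\<dots> = t * (t * inner w (P w) - 2 * inner w w)"
  proof -
    have "inner v (P w) = inner w w" "inner w (P v) = inner w w"
      unfolding w_def by (rule symmetric) (rule refl)
    then show ?thesis using assms(7) by (simp add: algebra_simps)
  qed
  also have "\<dots> < 0"
    using \<open>0 < t\<close> \<open>t * inner w (P w) < inner w w\<close> \<open>0 < inner w w\<close>
    by (intro mult_pos_neg) linarith+
  finally show False by simp
qed

lemma unitary_cmat_eigenvector_of_hermitian_part:
  assumes "unitary_cmat W" "W *v v + adjoint_cmat W *v v = M *s v" "v \<noteq> 0"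
  shows "\<exists>u z. u \<in> vec.span {v, W *v v} \<and> u \<noteq> 0 \<and> W *v u = z *s u"
proof -
  have quadratic: "W *v (W *v v) + v = M *s (W *v v)"
    using arg_cong[OF assms(2), of "(*v) W"] unitary_cmat_cancel_adjoint[OF assms(1)]
    by (simp add: matrix_vector_right_distrib vector_scalar_commute)
  \<comment> \<open>\<open>z\<^sub>1, z\<^sub>2\<close> are the roots of \<open>z\<^sup>2 - M z + 1\<close>\<close>
  define r where "r = csqrt (M\<^sup>2 - 4)"
  define z1 where "z1 = (M + r) / 2"
  define z2 where "z2 = (M - r) / 2"
  have "z1 + z2 = M" by (simp add: z1_def z2_def field_simps)
  have "z1 * z2 = 1"
    using power2_csqrt[of "M\<^sup>2 - 4"] by (simp add: z1_def z2_def r_def field_simps power2_eq_square)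
  define u where "u = W *v v - z2 *s v"
  have "W *v u = z1 *s u"
  proof -
    have "W *v u = W *v (W *v v) - z2 *s (W *v v)"
      by (simp add: u_def matrix_vector_mult_diff_distrib vector_scalar_commute)
    also have "\<dots> = (z1 + z2) *s (W *v v) - (z1 * z2) *s v - z2 *s (W *v v)"
      using quadratic \<open>z1 + z2 = M\<close> \<open>z1 * z2 = 1\<close> by (simp add: algebra_simps)
    also have "\<dots> = z1 *s u"
      by (simp add: u_def vec_eq_iff algebra_simps)
    finally show ?thesis .
  qed
  moreover have "u \<in> vec.span {v, W *v v}"
    unfolding u_def by (intro vec.span_diff vec.span_scale vec.span_base) auto
  moreover have "W *v v = z2 *s v" if "u = 0"
    using that by (simp add: u_def)
  ultimately show ?thesis
    using \<open>v \<noteq> 0\<close> vec.span_base[of v "{v, W *v v}"] by (cases "u = 0") auto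
qed

lemma quadratic_form_attains_max_on_subspace:
  fixes L :: "'a::euclidean_space \<Rightarrow> 'a"
  assumes "linear L" "subspace V" "v \<in> V" "v \<noteq> 0"
  obtains v0 where "v0 \<in> V" "norm v0 = 1"
    "\<And>u. u \<in> V \<Longrightarrow> inner u (L u) \<le> inner v0 (L v0) * (norm u)\<^sup>2"
proof -
  define f where "f u = inner u (L u)" for u
  define S where "S = V \<inter> sphere 0 1"
  have "compact S"
    unfolding S_def using \<open>subspace V\<close> by (intro closed_Int_compact closed_subspace compact_sphere)
  moreover have "(1 / norm v) *\<^sub>R v \<in> S"
    using assms by (simp add: S_def subspace_scale)
  moreover have "continuous_on S f"
    unfolding f_def using \<open>linear L\<close> by (intro continuous_intros linear_continuous_on)
      (simp add: linear_conv_bounded_linear)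
  ultimately obtain v0 where "v0 \<in> S" and v0_max: "\<And>y. y \<in> S \<Longrightarrow> f y \<le> f v0"
    using continuous_attains_sup[of S f] by blast
  have "f u \<le> f v0 * (norm u)\<^sup>2" if "u \<in> V" for u
  proof (cases "u = 0")
    case False
    have "(1 / norm u) *\<^sub>R u \<in> S"
      using \<open>subspace V\<close> that False by (simp add: S_def subspace_scale)
    then have "f ((1 / norm u) *\<^sub>R u) \<le> f v0"
      by (rule v0_max)
    moreover have "f ((1 / norm u) *\<^sub>R u) = f u / (norm u)\<^sup>2"
      by (simp add: f_def linear_scale[OF \<open>linear L\<close>] power2_eq_square)
    ultimately show ?thesis
      using False by (simp add: field_simps)
  qed (simp add: f_def linear_0[OF \<open>linear L\<close>])
  with \<open>v0 \<in> S\<close> that show ?thesis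
    by (auto simp: S_def f_def)
qed

text \<open>A maximiser \<open>v\<^sub>0\<close> of \<open>Re \<langle>u, W u\<rangle>\<close> on the unit sphere of \<open>V\<close> is an eigenvector of the
  Hermitian part \<open>(W + W\<^sup>*) / 2\<close>: with \<open>m\<close> the maximum, \<open>m - (W + W\<^sup>*) / 2\<close> is positive
  semidefinite on \<open>V\<close> and its quadratic form vanishes at \<open>v\<^sub>0\<close>.\<close>

lemma hermitian_part_has_eigenvector_in_invariant_subspace:
  fixes W :: "complex^'n^'n"
  assumes "subspace V"
    and W_V: "\<And>x. x \<in> V \<Longrightarrow> W *v x \<in> V"
    and adjoint_W_V: "\<And>x. x \<in> V \<Longrightarrow> adjoint_cmat W *v x \<in> V"
    and "v \<in> V" "v \<noteq> 0"
  shows "\<exists>v0\<in>V. v0 \<noteq> 0 \<and> (\<exists>m. W *v v0 + adjoint_cmat W *v v0 = complex_of_real m *s v0)"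
proof -
  obtain v0 where "v0 \<in> V" "norm v0 = 1"
    and v0_max: "\<And>u. u \<in> V \<Longrightarrow> inner u (W *v u) \<le> inner v0 (W *v v0) * (norm u)\<^sup>2"
    using quadratic_form_attains_max_on_subspace[OF matrix_vector_mul_linear assms(1,4,5)] by blast
  define m where "m = inner v0 (W *v v0)"
  define P where "P u = m *\<^sub>R u - (1/2) *\<^sub>R (W *v u + adjoint_cmat W *v u)" for u
  have "linear P"
    unfolding P_def
    by (intro linearI) (simp_all add: matrix_vector_right_distrib algebra_simps
        linear_scale[OF matrix_vector_mul_linear])
  moreover have "P x \<in> V" if "x \<in> V" for x
    unfolding P_def using \<open>subspace V\<close> that W_V adjoint_W_V
    by (intro subspace_diff subspace_scale subspace_add) auto
  moreover have "inner x (P y) = inner (P x) y" for x y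
    by (simp add: P_def inner_diff_right inner_diff_left inner_add_right inner_add_left
        inner_adjoint_cmat_right)
  moreover have form: "inner u (P u) = m * (norm u)\<^sup>2 - inner u (W *v u)" for u
  proof -
    have "inner u (adjoint_cmat W *v u) = inner (W *v u) u"
      using inner_adjoint_cmat_right[of u "adjoint_cmat W" u] by simp
    then show ?thesis
      by (simp add: P_def inner_diff_right inner_add_right power2_norm_eq_inner inner_commute)
  qed
  moreover have "0 \<le> inner u (P u)" if "u \<in> V" for u
    using v0_max[OF that] form[of u] by (simp add: m_def)
  ultimately have "P v0 = 0"
    using \<open>subspace V\<close> \<open>v0 \<in> V\<close> \<open>norm v0 = 1\<close>
    by (intro nonneg_symmetric_form_zero_imp_zero[of P V]) (auto simp: m_def)
  then have "W *v v0 + adjoint_cmat W *v v0 = 2 *\<^sub>R (m *\<^sub>R v0)"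
    by (simp add: P_def algebra_simps)
  then have "W *v v0 + adjoint_cmat W *v v0 = complex_of_real (2 * m) *s v0"
    by (simp add: scaleR_eq_vector_scalar_mult vector_smult_assoc)
  with \<open>v0 \<in> V\<close> \<open>norm v0 = 1\<close> show ?thesis
    by (metis norm_zero zero_neq_one)
qed

lemma unitary_cmat_invariant_subspace_has_eigenvector:
  assumes W: "unitary_cmat W" and "vec.subspace V"
    and W_V: "\<And>x. x \<in> V \<Longrightarrow> W *v x \<in> V"
    and adjoint_W_V: "\<And>x. x \<in> V \<Longrightarrow> adjoint_cmat W *v x \<in> V"
    and "v \<in> V" "v \<noteq> 0"
  shows "\<exists>u\<in>V. u \<noteq> 0 \<and> (\<exists>z. W *v u = z *s u)"
proof -
  have "subspace V"
    using \<open>vec.subspace V\<close>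
    by (simp add: subspace_def vec.subspace_def scaleR_eq_vector_scalar_mult)
  then obtain v0 m where "v0 \<in> V" "v0 \<noteq> 0"
    and "W *v v0 + adjoint_cmat W *v v0 = complex_of_real m *s v0"
    using hermitian_part_has_eigenvector_in_invariant_subspace[OF _ W_V adjoint_W_V \<open>v \<in> V\<close> \<open>v \<noteq> 0\<close>]
    by blast
  then obtain u z where "u \<in> vec.span {v0, W *v v0}" "u \<noteq> 0" "W *v u = z *s u"
    using unitary_cmat_eigenvector_of_hermitian_part[OF W] by blast
  moreover have "vec.span {v0, W *v v0} \<subseteq> V"
    using \<open>v0 \<in> V\<close> W_V \<open>vec.subspace V\<close> by (intro vec.span_minimal) auto
  ultimately show ?thesis by (meson subsetD)
qed

lemma corthonormal_insert:
  assumes "corthonormal E" "cinner e0 e0 = 1" "\<And>e. e \<in> E \<Longrightarrow> cinner e e0 = 0"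
  shows "corthonormal (insert e0 E)"
proof -
  have "cinner e0 e = 0" if "e \<in> E" for e
    using assms(3)[OF that] cnj_cinner[of e e0] by simp
  then show ?thesis
    using assms unfolding corthonormal_def by auto
qed

lemma cinner_normalize_self:
  assumes "u \<noteq> 0"
  shows "cinner (complex_of_real (1 / norm u) *s u) (complex_of_real (1 / norm u) *s u) = 1"
proof -
  have "norm (complex_of_real (1 / norm u) *s u) = 1"
    using assms by (simp add: norm_vector_scalar_mult del: of_real_divide)
  then show ?thesis by (simp add: cinner_self)
qed

lemma unitary_cmat_adjoint_eigenvector:
  assumes "unitary_cmat W" "W *v e = z *s e"
  shows "adjoint_cmat W *v e = cnj z *s e"
proof (cases "e = 0")
  case False
  then have "cmod z = 1"
    using unitary_cmat_eigenvalue_norm[OF assms] by simp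
  then have "cnj z * z = 1"
    using complex_norm_square[of z] by (simp add: mult.commute)
  have "z *s (adjoint_cmat W *v e) = e"
    using unitary_cmat_adjoint_cancel[OF assms(1), of e] assms(2) by (simp add: vector_scalar_commute)
  then have "cnj z *s (z *s (adjoint_cmat W *v e)) = cnj z *s e" by simp
  with \<open>cnj z * z = 1\<close> show ?thesis by (simp add: vector_smult_assoc)
qed simp

lemma unitary_cmat_orthogonal_eigenvector:
  assumes W: "unitary_cmat W" and "W *v e = z *s e" "cinner e x = 0"
  shows "cinner e (W *v x) = 0" "cinner e (adjoint_cmat W *v x) = 0"
proof -
  have "adjoint_cmat W *v e = cnj z *s e"
    using W \<open>W *v e = z *s e\<close> by (rule unitary_cmat_adjoint_eigenvector)
  then show "cinner e (W *v x) = 0" "cinner e (adjoint_cmat W *v x) = 0"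
    using assms by (simp_all add: cinner_adjoint_right cinner_scale_left)
qed

lemma unitary_cmat_extend_orthonormal_eigenvectors:
  assumes W: "unitary_cmat W" and "corthonormal E"
    and eigenvectors: "\<forall>e\<in>E. \<exists>z. W *v e = z *s e"
    and "w \<noteq> 0" "\<And>e. e \<in> E \<Longrightarrow> cinner e w = 0"
  obtains e0 where "e0 \<notin> E" "corthonormal (insert e0 E)" "\<exists>z. W *v e0 = z *s e0"
proof -
  define V where "V = {v. \<forall>e\<in>E. cinner e v = 0}"
  have "vec.subspace V"
    by (simp add: V_def vec.subspace_def cinner_add_right cinner_scale_right)
  have W_V: "W *v x \<in> V" and adjoint_W_V: "adjoint_cmat W *v x \<in> V" if "x \<in> V" for x
    using unitary_cmat_orthogonal_eigenvector[OF W] eigenvectors \<open>x \<in> V\<close>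
    by (fastforce simp: V_def)+
  have "w \<in> V" using assms(5) by (simp add: V_def)
  then obtain u z where "u \<in> V" "u \<noteq> 0" "W *v u = z *s u"
    using unitary_cmat_invariant_subspace_has_eigenvector[OF W \<open>vec.subspace V\<close> W_V adjoint_W_V]
      \<open>w \<noteq> 0\<close> by blast
  define e0 where "e0 = complex_of_real (1 / norm u) *s u"
  have "cinner e0 e0 = 1"
    unfolding e0_def using \<open>u \<noteq> 0\<close> by (rule cinner_normalize_self)
  moreover have "cinner e e0 = 0" if "e \<in> E" for e
    using \<open>u \<in> V\<close> that by (simp add: e0_def V_def cinner_scale_right)
  ultimately have "e0 \<notin> E" "corthonormal (insert e0 E)"
    using \<open>corthonormal E\<close> by (auto intro: corthonormal_insert)
  moreover have "W *v e0 = z *s e0"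
    using \<open>W *v u = z *s u\<close> by (simp add: e0_def vector_scalar_commute vector_smult_assoc mult.commute)
  ultimately show ?thesis
    using that by blast
qed

lemma unitary_cmat_orthonormal_eigenbasis:
  fixes W :: "complex^'n^'n"
  assumes W: "unitary_cmat W"
  obtains E ev where "corthonormal E" "finite E" "\<And>e. e \<in> E \<Longrightarrow> W *v e = ev e *s e"
    "\<And>v. v = (\<Sum>e\<in>E. cinner e v *s e)"
proof -
  define eigen where "eigen E \<longleftrightarrow> corthonormal E \<and> (\<forall>e\<in>E. \<exists>z. W *v e = z *s e)"
    for E :: "(complex^'n) set"
  have "eigen {}" by (simp add: eigen_def corthonormal_def)
  moreover have "card E < CARD('n) + 1" if "eigen E" for E :: "(complex^'n) set"
    using that corthonormal_card_le(2)[of E] by (simp add: eigen_def)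
  ultimately obtain E where "eigen E" and E_max: "\<And>E'. eigen E' \<Longrightarrow> card E' \<le> card E"
    using ex_has_greatest_nat[of eigen "{}" card "CARD('n) + 1"] by meson
  then have "corthonormal E" "finite E" and eigenvectors: "\<forall>e\<in>E. \<exists>z. W *v e = z *s e"
    by (auto simp: eigen_def dest: corthonormal_card_le(1))
  have complete: "w = 0" if orth: "\<And>e. e \<in> E \<Longrightarrow> cinner e w = 0" for w
  proof (rule ccontr)
    assume "w \<noteq> 0"
    then obtain e0 where "e0 \<notin> E" "corthonormal (insert e0 E)" "\<exists>z. W *v e0 = z *s e0"
      using unitary_cmat_extend_orthonormal_eigenvectors[OF W \<open>corthonormal E\<close> eigenvectors _ orth]
      by blast
    then have "eigen (insert e0 E)"
      using eigenvectors by (simp add: eigen_def)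
    then show False
      using E_max[of "insert e0 E"] \<open>e0 \<notin> E\<close> \<open>finite E\<close> by simp
  qed
  obtain ev where "\<And>e. e \<in> E \<Longrightarrow> W *v e = ev e *s e"
    using bchoice[OF eigenvectors] by blast
  then show ?thesis
    using that \<open>corthonormal E\<close> \<open>finite E\<close> corthonormal_expansion[OF \<open>corthonormal E\<close> \<open>finite E\<close> complete]
    by blast
qed

lemma Re_mult_cnj_self: "Re (\<mu> * (c * cnj c * z)) = (cmod c)\<^sup>2 * Re (\<mu> * z)"
proof -
  have "\<mu> * (c * cnj c * z) = (cmod c)\<^sup>2 *\<^sub>R (\<mu> * z)"
    by (simp only: scaleR_conv_of_real complex_norm_square mult_ac)
  then show ?thesis by simp
qed

lemma Re_cinner_le_of_eigenbasis:
  assumes eigen: "\<And>e. e \<in> E \<Longrightarrow> W *v e = ev e *s e"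
    and expansion: "\<And>v. v = (\<Sum>e\<in>E. cinner e v *s e)"
    and bound: "\<And>e. e \<in> E \<Longrightarrow> Re (\<mu> * ev e) \<le> C"
  shows "Re (\<mu> * cinner v (W *v v)) \<le> C * (norm v)\<^sup>2"
proof -
  define c where "c e = cinner e v" for e
  have cinner_v: "cinner v (\<Sum>e\<in>E. a e *s e) = (\<Sum>e\<in>E. a e * cnj (c e))" for a
    by (simp add: cinner_sum_right cinner_scale_right c_def cnj_cinner)
  have v_eq: "v = (\<Sum>e\<in>E. c e *s e)"
    unfolding c_def by (rule expansion)
  have "W *v v = (\<Sum>e\<in>E. c e *s (W *v e))"
    using v_eq by (simp add: linear_sum[OF matrix_vector_mul_linear] vector_scalar_commute)
  also have "\<dots> = (\<Sum>e\<in>E. (c e * ev e) *s e)"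
    by (intro sum.cong refl) (simp add: eigen vector_smult_assoc)
  finally have "cinner v (W *v v) = (\<Sum>e\<in>E. c e * cnj (c e) * ev e)"
    by (simp add: cinner_v mult_ac)
  then have "Re (\<mu> * cinner v (W *v v)) = (\<Sum>e\<in>E. (cmod (c e))\<^sup>2 * Re (\<mu> * ev e))"
    by (simp only: sum_distrib_left Re_sum Re_mult_cnj_self)
  also have "\<dots> \<le> (\<Sum>e\<in>E. (cmod (c e))\<^sup>2 * C)"
    using bound by (intro sum_mono mult_left_mono) auto
  also have "\<dots> = C * (norm v)\<^sup>2"
  proof -
    have "complex_of_real ((norm v)\<^sup>2) = (\<Sum>e\<in>E. c e * cnj (c e))"
      using cinner_v[of c] v_eq cinner_self[of v] by simp
    also have "\<dots> = of_real (\<Sum>e\<in>E. (cmod (c e))\<^sup>2)"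
      by (simp only: of_real_sum complex_norm_square)
    finally have "(norm v)\<^sup>2 = (\<Sum>e\<in>E. (cmod (c e))\<^sup>2)"
      by (simp only: of_real_eq_iff)
    then show ?thesis by (simp add: sum_distrib_left mult.commute)
  qed
  finally show ?thesis .
qed

lemma unitary_cmat_exists_rotation_Re_cinner_le:
  fixes W :: "complex^'n^'n"
  assumes W: "unitary_cmat W"
  shows "\<exists>\<mu>. cmod \<mu> = 1 \<and> (\<forall>v. Re (\<mu> * cinner v (W *v v)) \<le> cos (pi / CARD('n)) * (norm v)\<^sup>2)"
proof -
  obtain E ev where "corthonormal E" "finite E" and eigen: "\<And>e. e \<in> E \<Longrightarrow> W *v e = ev e *s e"
    and expansion: "\<And>v. v = (\<Sum>e\<in>E. cinner e v *s e)"
    using unitary_cmat_orthonormal_eigenbasis[OF W] by blast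
  have "ev ` E \<subseteq> sphere 0 1"
  proof
    fix z assume "z \<in> ev ` E"
    then obtain e where "e \<in> E" "z = ev e" by blast
    moreover have "e \<noteq> 0"
      using \<open>corthonormal E\<close> \<open>e \<in> E\<close> unfolding corthonormal_def by force
    ultimately show "z \<in> sphere 0 1"
      using unitary_cmat_eigenvalue_norm[OF W eigen] by simp
  qed
  moreover have "card (ev ` E) \<le> CARD('n)"
    using card_image_le[OF \<open>finite E\<close>, of ev] corthonormal_card_le(2)[OF \<open>corthonormal E\<close>]
    by linarith
  ultimately obtain \<mu> where "cmod \<mu> = 1" and "\<And>e. e \<in> E \<Longrightarrow> Re (\<mu> * ev e) \<le> cos (pi / CARD('n))"
    using exists_rotation_Re_le_cos[of "ev ` E" "CARD('n)"] \<open>finite E\<close> by auto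
  then show ?thesis
    using Re_cinner_le_of_eigenbasis[OF eigen expansion] by blast
qed

section \<open>Block matrices\<close>

definition top_half :: "'a^('n::finite + 'm::finite) \<Rightarrow> 'a^'n" where
  "top_half x = (\<chi> i. x $ Inl i)"

definition bottom_half :: "'a^('n::finite + 'm::finite) \<Rightarrow> 'a^'m" where
  "bottom_half x = (\<chi> i. x $ Inr i)"

definition stack_vec :: "'a^'n::finite \<Rightarrow> 'a^'m::finite \<Rightarrow> 'a^('n + 'm)" where
  "stack_vec a b = (\<chi> i. case i of Inl j \<Rightarrow> a $ j | Inr j \<Rightarrow> b $ j)"

lemma sum_UNIV_sum_type:
  "(\<Sum>i\<in>UNIV. f i) = (\<Sum>i\<in>UNIV. f (Inl i)) + (\<Sum>i\<in>UNIV. f (Inr i))"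
  for f :: "'a::finite + 'b::finite \<Rightarrow> 'c::comm_monoid_add"
  using sum.Plus[of "UNIV :: 'a set" "UNIV :: 'b set" f] by (simp add: comp_def)

lemma block2_mult_vector:
  "block2 P Q R S *v x
    = stack_vec (P *v top_half x + Q *v bottom_half x) (R *v top_half x + S *v bottom_half x)"
  unfolding vec_eq_iff
proof
  fix i
  show "(block2 P Q R S *v x) $ i
      = stack_vec (P *v top_half x + Q *v bottom_half x) (R *v top_half x + S *v bottom_half x) $ i"
    by (cases i) (simp_all add: block2_def matrix_vector_mult_def stack_vec_def top_half_def
        bottom_half_def sum_UNIV_sum_type)
qed

lemma block2_mult:
  "block2 P Q R S ** block2 P' Q' R' S'
    = block2 (P ** P' + Q ** R') (P ** Q' + Q ** S') (R ** P' + S ** R') (R ** Q' + S ** S')"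
  unfolding vec_eq_iff
proof (intro allI)
  fix i j
  show "(block2 P Q R S ** block2 P' Q' R' S') $ i $ j
      = block2 (P ** P' + Q ** R') (P ** Q' + Q ** S') (R ** P' + S ** R') (R ** Q' + S ** S') $ i $ j"
    by (cases i; cases j) (simp_all add: block2_def matrix_matrix_mult_def sum_UNIV_sum_type)
qed

lemma norm_stack_vec_power2:
  "(norm (stack_vec a b))\<^sup>2 = (norm a)\<^sup>2 + (norm (b :: 'a::real_inner^'m))\<^sup>2"
  by (simp add: power2_norm_eq_inner inner_vec_def sum_UNIV_sum_type stack_vec_def)

lemma norm_halves_power2:
  "(norm x)\<^sup>2 = (norm (top_half x))\<^sup>2 + (norm (bottom_half (x :: 'a::real_inner^('n::finite + 'm::finite))))\<^sup>2"
  by (simp add: power2_norm_eq_inner inner_vec_def sum_UNIV_sum_type top_half_def bottom_half_def)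

lemma cmat_scale_mult_vector: "cmat_scale c B *v y = c *s (B *v y)"
  by (simp add: vec_eq_iff cmat_scale_def matrix_vector_mult_def sum_distrib_left mult.assoc)

lemma cmat_scale_mult_left: "cmat_scale c P ** Q = cmat_scale c (P ** Q)"
  by (simp add: vec_eq_iff cmat_scale_def matrix_matrix_mult_def sum_distrib_left mult.assoc)

lemma cmat_scale_mult_right: "P ** cmat_scale c Q = cmat_scale c (P ** Q)"
  by (simp add: vec_eq_iff cmat_scale_def matrix_matrix_mult_def sum_distrib_left mult_ac)

lemma cmat_scale_cmat_scale: "cmat_scale c (cmat_scale d P) = cmat_scale (c * d) P"
  by (simp add: vec_eq_iff cmat_scale_def mult.assoc)

lemma cmat_scale_1 [simp]: "cmat_scale 1 P = P"
  by (simp add: vec_eq_iff cmat_scale_def)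

lemma block2_twisted_commute:
  assumes "cmod l = 1"
  shows "block2 A (cmat_scale l B) B A ** block2 B A (cmat_scale (cnj l) A) B
       = block2 B A (cmat_scale (cnj l) A) B ** block2 A (cmat_scale l B) B A"
proof -
  have "l * cnj l = 1" "cnj l * l = 1"
    using complex_norm_square[of l] assms by (simp_all add: mult.commute)
  then show ?thesis
    by (simp add: block2_mult cmat_scale_mult_left cmat_scale_mult_right cmat_scale_cmat_scale
        add.commute)
qed

section \<open>The norm estimate\<close>

lemma power2_norm_add: "(norm (x + y))\<^sup>2 = (norm x)\<^sup>2 + (norm y)\<^sup>2 + 2 * inner x (y :: 'a::real_inner)"
  by (simp add: power2_norm_eq_inner inner_add_left inner_add_right inner_commute)

lemma cos_pi_div_double_nonneg: "0 \<le> cos (pi / (2 * real n))"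
proof (cases "n = 0")
  case False
  then have "pi / (2 * n) \<le> pi / 2"
    by (intro frac_le) auto
  moreover have "0 \<le> pi / (2 * n)"
    by simp
  ultimately show ?thesis
    by (intro cos_ge_zero) linarith+
qed simp

lemma inner_cnj_scale_left: "inner (cnj l *s a) b = inner a (l *s (b :: complex^'n))"
  by (simp add: cinner_scale_left cinner_scale_right flip: Re_cinner)

lemma unitary_cmat_exists_rotation_norm_le:
  fixes W :: "complex^'n^'n"
  assumes W: "unitary_cmat W"
  shows "\<exists>l. cmod l = 1 \<and> (\<forall>y. norm (l *s (W *v y) + y) \<le> 2 * cos (pi / (2 * CARD('n))) * norm y)"
proof -
  obtain l where "cmod l = 1"
    and l: "\<And>y. Re (l * cinner y (W *v y)) \<le> cos (pi / CARD('n)) * (norm y)\<^sup>2"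
    using unitary_cmat_exists_rotation_Re_cinner_le[OF W] by blast
  define k where "k = 2 * cos (pi / (2 * CARD('n)))"
  have "0 \<le> k"
    by (simp add: k_def cos_pi_div_double_nonneg)
  have "k\<^sup>2 = 2 + 2 * cos (pi / CARD('n))"
    using cos_double_cos[of "pi / (2 * CARD('n))"] by (simp add: k_def power_mult_distrib)
  have "norm (l *s (W *v y) + y) \<le> k * norm y" for y
  proof (rule power2_le_imp_le)
    have "cinner (W *v y) y = cnj (cinner y (W *v y))"
      by (simp add: cnj_cinner)
    then have "inner (l *s (W *v y)) y = Re (l * cinner y (W *v y))"
      by (simp add: cinner_scale_left flip: Re_cinner)
    then have "(norm (l *s (W *v y) + y))\<^sup>2 = 2 * (norm y)\<^sup>2 + 2 * Re (l * cinner y (W *v y))"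
      using \<open>cmod l = 1\<close> by (simp add: power2_norm_add norm_vector_scalar_mult unitary_cmat_norm[OF W])
    also have "\<dots> \<le> k\<^sup>2 * (norm y)\<^sup>2"
      using l[of y] \<open>k\<^sup>2 = 2 + 2 * cos (pi / CARD('n))\<close> by (simp add: algebra_simps)
    finally show "(norm (l *s (W *v y) + y))\<^sup>2 \<le> (k * norm y)\<^sup>2"
      by (simp add: power_mult_distrib)
  qed (use \<open>0 \<le> k\<close> in simp)
  with \<open>cmod l = 1\<close> show ?thesis
    by (auto simp: k_def)
qed

lemma norm_block2_power2:
  fixes A B :: "complex^'n^'n"
  assumes A: "unitary_cmat A" and B: "unitary_cmat B" and "cmod l = 1"
  defines "D y \<equiv> l *s (adjoint_cmat A *v (B *v y)) + adjoint_cmat B *v (A *v y)"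
  shows "(norm (block2 A (cmat_scale l B) B A *v x))\<^sup>2
           = 2 * (norm x)\<^sup>2 + 2 * inner (top_half x) (D (bottom_half x))"
    and "(norm (block2 B A (cmat_scale (cnj l) A) B *v x))\<^sup>2
           = 2 * (norm x)\<^sup>2 + 2 * inner (top_half x) (D (bottom_half x))"
proof -
  define x1 where "x1 = top_half x"
  define x2 where "x2 = bottom_half x"
  have norms: "norm (A *v y) = norm y" "norm (B *v y) = norm y" "norm (l *s y) = norm y"
    "norm (cnj l *s y) = norm y" for y
    using A B \<open>cmod l = 1\<close> by (simp_all add: unitary_cmat_norm norm_vector_scalar_mult)
  have "inner (A *v x1) (l *s (B *v x2)) = inner x1 (l *s (adjoint_cmat A *v (B *v x2)))"
    by (simp add: inner_commute[of "A *v x1"] inner_adjoint_cmat_right vector_scalar_commute)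
      (simp add: inner_commute)
  moreover have "inner (B *v x1) (A *v x2) = inner x1 (adjoint_cmat B *v (A *v x2))"
    by (simp add: inner_commute[of "B *v x1"] inner_adjoint_cmat_right)
  ultimately have "inner (A *v x1) (l *s (B *v x2)) + inner (B *v x1) (A *v x2) = inner x1 (D x2)"
    by (simp add: D_def inner_add_right)
  moreover have "(norm x)\<^sup>2 = (norm x1)\<^sup>2 + (norm x2)\<^sup>2"
    by (simp add: x1_def x2_def norm_halves_power2)
  ultimately show "(norm (block2 A (cmat_scale l B) B A *v x))\<^sup>2
           = 2 * (norm x)\<^sup>2 + 2 * inner (top_half x) (D (bottom_half x))"
    and "(norm (block2 B A (cmat_scale (cnj l) A) B *v x))\<^sup>2
           = 2 * (norm x)\<^sup>2 + 2 * inner (top_half x) (D (bottom_half x))"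
    by (simp_all add: block2_mult_vector cmat_scale_mult_vector norm_stack_vec_power2
        power2_norm_add norms inner_cnj_scale_left x1_def [symmetric] x2_def [symmetric])
qed

lemma inner_halves_le:
  assumes "\<And>y. norm (f y) \<le> k * norm y" "0 \<le> k"
  shows "2 * inner (top_half x) (f (bottom_half x)) \<le> k * (norm (x :: 'a::real_inner^('n::finite + 'm::finite)))\<^sup>2"
proof -
  have "2 * inner (top_half x) (f (bottom_half x)) \<le> 2 * (norm (top_half x) * (k * norm (bottom_half x)))"
    using norm_cauchy_schwarz[of "top_half x" "f (bottom_half x)"]
      mult_left_mono[OF assms(1) norm_ge_zero, of "top_half x" "bottom_half x"] by linarith
  also have "\<dots> \<le> k * ((norm (top_half x))\<^sup>2 + (norm (bottom_half x))\<^sup>2)"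
    using mult_left_mono[OF sum_squares_bound[of "norm (top_half x)" "norm (bottom_half x)"] \<open>0 \<le> k\<close>]
    by (simp add: power2_eq_square algebra_simps)
  finally show ?thesis
    by (simp add: norm_halves_power2)
qed

lemma norm_le_sqrt_if_power2_le:
  assumes "(norm y)\<^sup>2 \<le> c * (norm x)\<^sup>2"
  shows "norm y \<le> sqrt c * norm x"
  using real_le_rsqrt[OF assms] by (simp add: real_sqrt_mult)

lemma op_norm_block2_le:
  fixes A B :: "complex^'n^'n"
  assumes A: "unitary_cmat A" and B: "unitary_cmat B" and "cmod l = 1" "0 \<le> k"
    and D: "\<And>y. norm (l *s (adjoint_cmat A *v (B *v y)) + adjoint_cmat B *v (A *v y)) \<le> k * norm y"
  shows "op_norm (block2 A (cmat_scale l B) B A) \<le> sqrt (2 + k)"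
    and "op_norm (block2 B A (cmat_scale (cnj l) A) B) \<le> sqrt (2 + k)"
proof -
  have "2 * (norm x)\<^sup>2 + 2 * inner (top_half x)
          (l *s (adjoint_cmat A *v (B *v bottom_half x)) + adjoint_cmat B *v (A *v bottom_half x))
        \<le> (2 + k) * (norm x)\<^sup>2" for x
    using inner_halves_le[OF D \<open>0 \<le> k\<close>, of x] by (simp add: algebra_simps)
  then show "op_norm (block2 A (cmat_scale l B) B A) \<le> sqrt (2 + k)"
    and "op_norm (block2 B A (cmat_scale (cnj l) A) B) \<le> sqrt (2 + k)"
    unfolding op_norm_def
    by (intro onorm_le norm_le_sqrt_if_power2_le;
        simp add: norm_block2_power2[OF A B \<open>cmod l = 1\<close>])+
qed

lemma unitary_cmat_exists_rotation_twisted_sum_le: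
  fixes A B :: "complex^'n^'n"
  assumes A: "unitary_cmat A" and B: "unitary_cmat B"
  shows "\<exists>l. cmod l = 1 \<and> (\<forall>y. norm (l *s (adjoint_cmat A *v (B *v y)) + adjoint_cmat B *v (A *v y))
                                \<le> 2 * cos (pi / (2 * CARD('n))) * norm y)"
proof -
  define U where "U = adjoint_cmat A ** B"
  have "unitary_cmat (U ** U)"
    unfolding U_def using A B by (intro unitary_cmat_mult unitary_cmat_adjoint)
  then obtain l where "cmod l = 1"
    and l: "\<And>y. norm (l *s ((U ** U) *v y) + y) \<le> 2 * cos (pi / (2 * CARD('n))) * norm y"
    using unitary_cmat_exists_rotation_norm_le by blast
  have "l *s (adjoint_cmat A *v (B *v y)) + adjoint_cmat B *v (A *v y)
      = adjoint_cmat B *v (A *v (l *s ((U ** U) *v y) + y))" for y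
    using unitary_cmat_cancel_adjoint[OF A] unitary_cmat_adjoint_cancel[OF B]
    by (simp add: U_def matrix_vector_mul_assoc [symmetric] matrix_vector_right_distrib
        vector_scalar_commute)
  then have "norm (l *s (adjoint_cmat A *v (B *v y)) + adjoint_cmat B *v (A *v y))
      = norm (l *s ((U ** U) *v y) + y)" for y
    using A B by (simp add: unitary_cmat_norm unitary_cmat_adjoint)
  with \<open>cmod l = 1\<close> l show ?thesis by metis
qed

theorem theoremA1:
  fixes A B :: "complex^'n^'n"
  assumes "unitary_cmat A" and "unitary_cmat B"
  shows "(\<forall>l\<in>sphere (0::complex) 1.
            block2 A (cmat_scale l B) B A ** block2 B A (cmat_scale (cnj l) A) B
          = block2 B A (cmat_scale (cnj l) A) B ** block2 A (cmat_scale l B) B A)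
     \<and> (INF l\<in>sphere (0::complex) 1.
          max (op_norm (block2 A (cmat_scale l B) B A)) (op_norm (block2 B A (cmat_scale (cnj l) A) B)))
       \<le> sqrt (2 + 2 * sin (pi / 2 * (1 - 1 / real CARD('n))))"
proof
  show "\<forall>l\<in>sphere (0::complex) 1.
            block2 A (cmat_scale l B) B A ** block2 B A (cmat_scale (cnj l) A) B
          = block2 B A (cmat_scale (cnj l) A) B ** block2 A (cmat_scale l B) B A"
    by (simp add: block2_twisted_commute)
next
  define k where "k = 2 * cos (pi / (2 * CARD('n)))"
  obtain l where "cmod l = 1"
    and D: "\<And>y. norm (l *s (adjoint_cmat A *v (B *v y)) + adjoint_cmat B *v (A *v y)) \<le> k * norm y"
    using unitary_cmat_exists_rotation_twisted_sum_le[OF assms] by (auto simp: k_def)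
  have "0 \<le> k"
    by (simp add: k_def cos_pi_div_double_nonneg)
  have "sin (pi / 2 * (1 - 1 / real CARD('n))) = cos (pi / (2 * CARD('n)))"
    by (simp add: sin_cos_eq right_diff_distrib)
  then have "sqrt (2 + k) = sqrt (2 + 2 * sin (pi / 2 * (1 - 1 / real CARD('n))))"
    by (simp add: k_def)
  moreover have "bdd_below ((\<lambda>l. max (op_norm (block2 A (cmat_scale l B) B A))
      (op_norm (block2 B A (cmat_scale (cnj l) A) B))) ` sphere 0 1)"
    by (intro bdd_belowI[of _ 0])
      (auto simp: op_norm_def intro: max.coboundedI1 onorm_pos_le)
  ultimately show "(INF l\<in>sphere (0::complex) 1.
          max (op_norm (block2 A (cmat_scale l B) B A)) (op_norm (block2 B A (cmat_scale (cnj l) A) B)))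
       \<le> sqrt (2 + 2 * sin (pi / 2 * (1 - 1 / real CARD('n))))"
    using op_norm_block2_le[OF assms \<open>cmod l = 1\<close> \<open>0 \<le> k\<close> D] \<open>cmod l = 1\<close>
    by (intro cINF_lower2[where x = l]) auto
qed

end
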